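(* Let $\delta\in(0,1)$, let $M\ge\Theta(N\log(N/\delta))$, and for each expert $i\in[M]$ let $W^{(i)}_0\sim\mathcal{N}(0,\frac{\sigma_0^2}{d}\mathbf{I}_d)$ and $n_i^*=\arg\max_{n\in[N]}\langle W^{(i)}_0,v_n\rangle$. Then for each $i\in[M]$, with probability at least $1-\delta$, $$\max_{n\ne n_i^*}\langle W^{(i)}_0,v_n\rangle\le\Big(1-\frac{\delta}{3MN^2}\Big)\langle W^{(i)}_0,v_{n_i^*}\rangle.$$
   Context: $\{v_1,\dots,v_N\}\subset\mathbb{R}^d$ is an orthonormal set (the classification signals); $\sigma_0>0$ is the initialization scale; $W^{(i)}_0\in\mathbb{R}^d$ is the initial FFN weight of expert $i$ of a Mixture-of-Transformers with $M$ experts. *)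

theory Defs
  imports "HOL-Probability.Probability"
begin

text \<open>Vectors of R^d are represented as functions nat => real, indexed by {..<d}.\<close>

definition ip :: "nat \<Rightarrow> (nat \<Rightarrow> real) \<Rightarrow> (nat \<Rightarrow> real) \<Rightarrow> real" where
  "ip d w u = (\<Sum>j<d. w j * u j)"

definition orthonormal_family :: "nat \<Rightarrow> nat \<Rightarrow> (nat \<Rightarrow> nat \<Rightarrow> real) \<Rightarrow> bool" where
  "orthonormal_family d N v \<longleftrightarrow>
     (\<forall>n\<in>{1..N}. \<forall>m\<in>{1..N}. ip d (v n) (v m) = (if n = m then 1 else 0))"

definition gauss_init :: "nat \<Rightarrow> real \<Rightarrow> (nat \<Rightarrow> real) measure" where
  "gauss_init d \<sigma>0 = PiM {..<d} (\<lambda>_. density lborel (normal_density 0 (\<sigma>0 / sqrt (real d))))"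

end

theory Submission
  imports Defs "HOL-Real_Asymp.Real_Asymp"
begin

text \<open>Write \<sigma> = \<sigma>0 / sqrt d. Each coordinate ip d W (v n) is N(0, \<sigma>^2), and the
  difference of two distinct ones is N(0, 2 \<sigma>^2). If some n other than the arg-max n* violates the
  inequality, then with \<epsilon> = \<delta> / (3 M N^2) either the largest coordinate is at least T = 3 M \<sigma>,
  an event of probability at most exp(-3M), or the gap between the coordinates of n* and n lies in
  [0, \<epsilon> T), which by the bounded Gaussian density has probability at most \<epsilon> T / (2 \<sigma>) = \<delta> / (2 N^2).
  A union bound over the N (N - 1) ordered pairs gives a failure probability of at most
  N^2 exp(-3M) + \<delta> / 2, which is at most \<delta> once M \<ge> N ln(N / \<delta>); so C = 1 works.\<close>

lemma ip_commute: "ip d u w = ip d w u"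
  by (simp add: ip_def mult.commute)

lemma ip_diff_left: "ip d (\<lambda>j. u j - w j) x = ip d u x - ip d w x"
  by (simp add: ip_def left_diff_distrib sum_subtractf)

lemma ip_diff_self:
  "ip d (\<lambda>j. u j - w j) (\<lambda>j. u j - w j) = ip d u u - 2 * ip d u w + ip d w w"
  by (simp add: ip_diff_left ip_commute[of d _ "\<lambda>j. u j - w j"] ip_commute[of d w u])

lemma orthonormal_family_dist_sq:
  assumes "orthonormal_family d N v" "p \<in> {1..N}" "q \<in> {1..N}" "p \<noteq> q"
  shows "ip d (\<lambda>j. v p j - v q j) (\<lambda>j. v p j - v q j) = 2"
  using assms by (simp add: ip_diff_self orthonormal_family_def)

lemma orthonormal_family_dim_pos:
  assumes "orthonormal_family d N v" "1 \<le> N"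
  shows "0 < d"
proof (rule ccontr)
  assume "\<not> 0 < d"
  then have "ip d (v 1) (v 1) = 0" by (simp add: ip_def)
  with assms show False by (simp add: orthonormal_family_def)
qed

lemma prob_space_gauss_init: "0 < s \<Longrightarrow> prob_space (gauss_init d s)"
  unfolding gauss_init_def by (rule prob_space_PiM, rule prob_space_normal_density) simp

lemma sets_gauss_init [measurable_cong]:
  "sets (gauss_init d s) = sets (PiM {..<d} (\<lambda>_. borel :: real measure))"
  unfolding gauss_init_def by (intro sets_PiM_cong) auto

lemma space_gauss_init: "space (gauss_init d s) = space (PiM {..<d} (\<lambda>_. borel :: real measure))"
  using sets_gauss_init by (rule sets_eq_imp_space_eq)

lemma ip_measurable [measurable]: "(\<lambda>W. ip d u W) \<in> borel_measurable (PiM {..<d} (\<lambda>_. borel))"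
  unfolding ip_def by measurable

lemma distributed_gauss_init_coordinate:
  assumes "j < d" "0 < s"
  shows "distributed (gauss_init d s) lborel (\<lambda>W. W j) (normal_density 0 (s / sqrt d))"
proof -
  have "distr (gauss_init d s) lborel (\<lambda>W. W j)
      = distr (gauss_init d s) (density lborel (normal_density 0 (s / sqrt d))) (\<lambda>W. W j)"
    by (rule distr_cong) auto
  also have "\<dots> = density lborel (normal_density 0 (s / sqrt d))"
    unfolding gauss_init_def
    by (rule distr_PiM_component) (use assms in \<open>auto intro!: prob_space_normal_density\<close>)
  finally show ?thesis
    using assms by (auto simp: distributed_def)
qed

lemma indep_vars_gauss_init_coordinates:
  assumes "0 < s" "0 < d"
  shows "prob_space.indep_vars (gauss_init d s) (\<lambda>_. borel) (\<lambda>j W. W j) {..<d}"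
proof -
  interpret prob_space "gauss_init d s" using assms(1) by (rule prob_space_gauss_init)
  have "distr (gauss_init d s) (PiM {..<d} (\<lambda>_. borel)) (\<lambda>W. \<lambda>j\<in>{..<d}. W j)
      = distr (gauss_init d s) (gauss_init d s) (\<lambda>W. W)"
    by (rule distr_cong)
      (auto simp: sets_gauss_init space_gauss_init space_PiM PiE_def extensional_def fun_eq_iff)
  also have "\<dots> = PiM {..<d} (\<lambda>_. density lborel (normal_density 0 (s / sqrt d)))"
    by (simp add: gauss_init_def)
  also have "\<dots> = PiM {..<d} (\<lambda>j. distr (gauss_init d s) borel (\<lambda>W. W j))"
  proof (rule PiM_cong)
    fix j assume "j \<in> {..<d}"
    then have "distr (gauss_init d s) lborel (\<lambda>W. W j) = density lborel (normal_density 0 (s / sqrt d))"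
      using distributed_gauss_init_coordinate assms(1) by (auto simp: distributed_def)
    then show "density lborel (normal_density 0 (s / sqrt d)) = distr (gauss_init d s) borel (\<lambda>W. W j)"
      by (metis distr_cong sets_lborel)
  qed simp
  finally show ?thesis
    using assms(2) by (subst indep_vars_iff_distr_eq_PiM') auto
qed

lemma distributed_gauss_init_ip:
  assumes s: "0 < s" and a: "0 < ip d a a"
  shows "distributed (gauss_init d s) lborel (\<lambda>W. ip d a W)
           (normal_density 0 (s / sqrt d * sqrt (ip d a a)))"
proof -
  interpret prob_space "gauss_init d s" using s by (rule prob_space_gauss_init)
  \<comment> \<open>sum_indep_normal needs nondegenerate summands, hence the restriction to the support of a\<close>
  define I where "I = {j \<in> {..<d}. a j \<noteq> 0}"
  define \<sigma> where "\<sigma> = s / sqrt d"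
  have "I \<noteq> {}"
    using a by (auto simp: I_def ip_def intro: ccontr)
  then have "0 < d" and \<sigma>: "0 < \<sigma>"
    using s by (auto simp: I_def \<sigma>_def)
  have indep: "indep_vars (\<lambda>_. borel) (\<lambda>j W. a j * W j) I"
    by (rule indep_vars_compose2[where Y = "\<lambda>j x. a j * x"],
        rule indep_vars_subset[OF indep_vars_gauss_init_coordinates[OF s \<open>0 < d\<close>]])
      (auto simp: I_def)
  have normal: "distributed (gauss_init d s) lborel (\<lambda>W. a j * W j) (normal_density 0 (\<bar>a j\<bar> * \<sigma>))"
    if "j \<in> I" for j
    using normal_density_affine[OF distributed_gauss_init_coordinate[of j d s], of "a j" 0] that s \<sigma>
    by (simp add: I_def \<sigma>_def)
  have "distributed (gauss_init d s) lborel (\<lambda>W. \<Sum>j\<in>I. a j * W j)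
          (normal_density 0 (sqrt (\<Sum>j\<in>I. (\<bar>a j\<bar> * \<sigma>)\<^sup>2)))"
    using sum_indep_normal[OF _ \<open>I \<noteq> {}\<close> indep, of "\<lambda>j. \<bar>a j\<bar> * \<sigma>" "\<lambda>_. 0"] normal \<sigma>
    by (simp add: I_def)
  moreover have "(\<Sum>j\<in>I. a j * W j) = ip d a W" for W
    unfolding ip_def I_def by (rule sum.mono_neutral_left) auto
  moreover have "(\<Sum>j\<in>I. (\<bar>a j\<bar> * \<sigma>)\<^sup>2) = (\<Sum>j<d. (\<bar>a j\<bar> * \<sigma>)\<^sup>2)"
    unfolding I_def by (rule sum.mono_neutral_left) auto
  moreover have "\<dots> = \<sigma>\<^sup>2 * ip d a a"
    by (simp add: ip_def sum_distrib_left power2_eq_square mult_ac)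
  ultimately show ?thesis
    using s \<sigma> by (simp add: real_sqrt_mult \<sigma>_def)
qed

lemma distributed_gauss_init_orthonormal:
  assumes "0 < s" "orthonormal_family d N v" "p \<in> {1..N}"
  shows "distributed (gauss_init d s) lborel (\<lambda>W. ip d W (v p)) (normal_density 0 (s / sqrt d))"
proof -
  have "(\<lambda>W. ip d W (v p)) = ip d (v p)" "ip d (v p) (v p) = 1"
    using assms(2,3) by (auto simp: fun_eq_iff ip_commute orthonormal_family_def)
  then show ?thesis
    using distributed_gauss_init_ip[OF assms(1), of d "v p"] by simp
qed

lemma distributed_gauss_init_orthonormal_diff:
  assumes "0 < s" "orthonormal_family d N v" "p \<in> {1..N}" "q \<in> {1..N}" "p \<noteq> q"
  shows "distributed (gauss_init d s) lborel (\<lambda>W. ip d W (v p) - ip d W (v q))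
           (normal_density 0 (s / sqrt d * sqrt 2))"
proof -
  have "(\<lambda>W. ip d W (v p) - ip d W (v q)) = ip d (\<lambda>j. v p j - v q j)"
    by (simp add: fun_eq_iff ip_diff_left ip_commute)
  then show ?thesis
    using distributed_gauss_init_ip[OF assms(1), of d "\<lambda>j. v p j - v q j"]
      orthonormal_family_dist_sq[OF assms(2-)]
    by simp
qed

lemma normal_density_le_peak:
  assumes "0 < \<tau>"
  shows "normal_density \<mu> \<tau> x \<le> 1 / (\<tau> * sqrt (2 * pi))"
proof -
  have "sqrt (2 * pi * \<tau>\<^sup>2) = \<tau> * sqrt (2 * pi)"
    using assms by (simp add: real_sqrt_mult)
  then show ?thesis
    using assms by (simp add: normal_density_def divide_right_mono)
qed

lemma normal_density_le_exp:
  assumes \<tau>: "0 < \<tau>" and x: "0 \<le> x"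
  shows "normal_density 0 \<tau> x \<le> exp (- x / \<tau>) / \<tau>"
proof -
  have "- x\<^sup>2 / (2 * \<tau>\<^sup>2) \<le> 1/2 + - x / \<tau>"
    using \<tau> zero_le_power2[of "x / \<tau> - 1"] by (simp add: field_simps power2_eq_square)
  then have "exp (- x\<^sup>2 / (2 * \<tau>\<^sup>2)) \<le> exp (1/2) * exp (- x / \<tau>)"
    by (simp flip: exp_add)
  also have "\<dots> \<le> 2 * exp (- x / \<tau>)"
    using exp_half_le2 by simp
  finally have num: "exp (- x\<^sup>2 / (2 * \<tau>\<^sup>2)) \<le> 2 * exp (- x / \<tau>)" .
  have "sqrt 4 \<le> sqrt (2 * pi)"
    using pi_gt3 by (subst real_sqrt_le_iff) simp
  then have den: "\<tau> * 2 \<le> \<tau> * sqrt (2 * pi)"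
    using \<tau> by simp
  have "normal_density 0 \<tau> x = exp (- x\<^sup>2 / (2 * \<tau>\<^sup>2)) / (\<tau> * sqrt (2 * pi))"
    using \<tau> by (simp add: normal_density_def real_sqrt_mult)
  also have "\<dots> \<le> 2 * exp (- x / \<tau>) / (\<tau> * 2)"
    using num den \<tau> by (intro frac_le) auto
  finally show ?thesis by simp
qed

context prob_space
begin

lemma prob_normal_interval_le:
  assumes Z: "distributed M lborel Z (normal_density \<mu> \<tau>)" and \<tau>: "0 < \<tau>" and "a \<le> b"
  shows "prob {x \<in> space M. a \<le> Z x \<and> Z x < b} \<le> (b - a) / (\<tau> * sqrt (2 * pi))"
proof -
  define c where "c = 1 / (\<tau> * sqrt (2 * pi))"
  have "0 \<le> c" using \<tau> by (simp add: c_def)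
  have "emeasure M (Z -` {a..<b} \<inter> space M)
      = (\<integral>\<^sup>+x. ennreal (normal_density \<mu> \<tau> x) * indicator {a..<b} x \<partial>lborel)"
    by (rule distributed_emeasure[OF Z]) simp
  also have "\<dots> \<le> (\<integral>\<^sup>+x. ennreal c * indicator {a..<b} x \<partial>lborel)"
    using normal_density_le_peak[OF \<tau>]
    by (intro nn_integral_mono) (auto simp: c_def indicator_def intro!: ennreal_leI)
  also have "\<dots> = ennreal (c * (b - a))"
    using \<open>a \<le> b\<close> \<open>0 \<le> c\<close> by (simp add: nn_integral_cmult_indicator ennreal_mult)
  finally show ?thesis
    using \<open>0 \<le> c\<close> \<open>a \<le> b\<close>
    by (simp add: emeasure_eq_measure vimage_def Int_def conj_commute c_def ennreal_le_iff)
qed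

lemma prob_normal_tail_le:
  assumes Z: "distributed M lborel Z (normal_density 0 \<tau>)" and \<tau>: "0 < \<tau>" and "0 \<le> a"
  shows "prob {x \<in> space M. a \<le> Z x} \<le> exp (- a / \<tau>)"
proof -
  have "emeasure M (Z -` {a..} \<inter> space M)
      = (\<integral>\<^sup>+x. ennreal (normal_density 0 \<tau> x) * indicator {a..} x \<partial>lborel)"
    by (rule distributed_emeasure[OF Z]) simp
  also have "\<dots> \<le> (\<integral>\<^sup>+x. ennreal (exp (- x / \<tau>) / \<tau>) * indicator {a..} x \<partial>lborel)"
    using normal_density_le_exp[OF \<tau>] \<open>0 \<le> a\<close>
    by (intro nn_integral_mono) (auto simp: indicator_def intro!: ennreal_leI)
  also have "\<dots> = 0 - (- exp (- a / \<tau>))"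
  proof (rule nn_integral_FTC_atLeast)
    show "((\<lambda>x. - exp (- x / \<tau>)) has_real_derivative exp (- x / \<tau>) / \<tau>) (at x)" for x
      using \<tau> by (auto intro!: derivative_eq_intros)
    show "((\<lambda>x. - exp (- x / \<tau>)) \<longlongrightarrow> 0) at_top"
      using \<tau> by real_asymp
  qed (use \<tau> in auto)
  finally show ?thesis
    by (simp add: emeasure_eq_measure vimage_def Int_def conj_commute ennreal_le_iff)
qed

end

lemma arg_max_on_if_finite:
  fixes f :: "'a \<Rightarrow> 'b::linorder"
  assumes "finite S" "S \<noteq> {}"
  shows "arg_max_on f S \<in> S" and "\<And>y. y \<in> S \<Longrightarrow> f y \<le> f (arg_max_on f S)"
proof -
  have "Max (f ` S) \<in> f ` S"
    using assms by simp
  then obtain m where "m \<in> S" "f m = Max (f ` S)"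
    by auto
  then have "\<forall>y\<in>S. f y \<le> f m"
    using assms by simp
  then have "arg_max_on f S \<in> S \<and> (\<forall>y\<in>S. f y \<le> f (arg_max_on f S))"
    unfolding arg_max_on_def using \<open>m \<in> S\<close>
    by (rule_tac arg_maxI[where x = m]) (auto simp: not_less)
  then show "arg_max_on f S \<in> S" and "\<And>y. y \<in> S \<Longrightarrow> f y \<le> f (arg_max_on f S)"
    by auto
qed

text \<open>arg_max_on chooses by Hilbert choice from the set of maximisers, and that set takes only
  finitely many values.\<close>
lemma measurable_arg_max_on:
  fixes f :: "'i \<Rightarrow> 'a \<Rightarrow> real"
  assumes S: "finite S" and f: "\<And>i. i \<in> S \<Longrightarrow> f i \<in> borel_measurable M"
  shows "(\<lambda>x. arg_max_on (\<lambda>i. f i x) S) \<in> measurable M (count_space UNIV)"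
proof -
  define maximizers where "maximizers x = {i \<in> S. \<forall>j\<in>S. f j x \<le> f i x}" for x
  have "arg_max_on (\<lambda>i. f i x) S = (SOME i. i \<in> maximizers x)" for x
    by (simp add: arg_max_on_def arg_max_def is_arg_max_linorder maximizers_def Ball_def)
  moreover have "maximizers \<in> measurable M (count_space (Pow S))"
  proof (subst measurable_count_space_eq2)
    have "{x \<in> space M. maximizers x = B} = {x \<in> space M. \<forall>i\<in>S. i \<in> B \<longleftrightarrow> (\<forall>j\<in>S. f j x \<le> f i x)}"
      if "B \<subseteq> S" for B
      using that by (auto simp: maximizers_def)
    then show "maximizers \<in> space M \<rightarrow> Pow S \<and> (\<forall>B\<in>Pow S. maximizers -` {B} \<inter> space M \<in> sets M)"
      using S f by (auto simp: maximizers_def vimage_def Int_def conj_commute)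
  qed (use S in simp)
  ultimately show ?thesis
    using measurable_comp[OF _ measurable_count_space, of maximizers M "Pow S" "\<lambda>B. SOME i. i \<in> B"]
    by (simp add: o_def)
qed

lemma large_or_near_tie:
  fixes x y \<epsilon> T :: real
  assumes "y \<le> x" "0 \<le> \<epsilon>" "(1 - \<epsilon>) * x < y"
  shows "T \<le> x \<or> (0 \<le> x - y \<and> x - y < \<epsilon> * T)"
proof (cases "T \<le> x")
  case False
  have "0 < x"
  proof (rule ccontr)
    assume "\<not> 0 < x"
    then have "x \<le> (1 - \<epsilon>) * x"
      using \<open>0 \<le> \<epsilon>\<close> by (simp add: algebra_simps mult_nonneg_nonpos)
    with assms show False by simp
  qed
  have "x - y < \<epsilon> * x"
    using assms by (simp add: algebra_simps)
  also have "\<dots> \<le> \<epsilon> * T"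
    using False \<open>0 \<le> \<epsilon>\<close> by (intro mult_left_mono) auto
  finally show ?thesis
    using assms by simp
qed simp

lemma sets_arg_max_on_dominates:
  fixes X :: "'i::countable \<Rightarrow> 'a \<Rightarrow> real"
  assumes S: "finite S" and X: "\<And>n. X n \<in> borel_measurable M"
  shows "{x \<in> space M. let k = arg_max_on (\<lambda>n. X n x) S in
            \<forall>n\<in>S. n \<noteq> k \<longrightarrow> X n x \<le> c * X k x} \<in> sets M"
proof -
  let ?dominated = "\<lambda>k x. \<forall>n\<in>S. n \<noteq> k \<longrightarrow> X n x \<le> c * X k x"
  have "Measurable.pred M (\<lambda>x. ?dominated (arg_max_on (\<lambda>n. X n x) S) x)"
  proof (rule measurable_compose_countable[where f = ?dominated])
    show "(\<lambda>x. arg_max_on (\<lambda>n. X n x) S) \<in> measurable M (count_space UNIV)"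
      using S X by (rule measurable_arg_max_on)
    have [measurable]: "X n \<in> borel_measurable M" for n
      by (rule X)
    have "{x \<in> space M. X n x \<le> c * X k x} \<in> sets M" for n k
      by measurable
    then show "Measurable.pred M (?dominated k)" for k
      by (intro pred_intros_finite(3) pred_intros_imp') (simp_all add: pred_def S)
  qed
  then show ?thesis
    by (simp add: pred_def Let_def)
qed

lemma arg_max_on_large_or_near_tie:
  fixes f :: "'a \<Rightarrow> real"
  assumes "finite S" "0 \<le> \<epsilon>"
    and "\<not> (let k = arg_max_on f S in \<forall>n\<in>S. n \<noteq> k \<longrightarrow> f n \<le> (1 - \<epsilon>) * f k)"
  shows "\<exists>p\<in>S. \<exists>q\<in>S. p \<noteq> q \<and> (T \<le> f p \<or> (0 \<le> f p - f q \<and> f p - f q < \<epsilon> * T))"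
proof -
  let ?k = "arg_max_on f S"
  obtain n where n: "n \<in> S" "n \<noteq> ?k" "(1 - \<epsilon>) * f ?k < f n"
    using assms(3) by (auto simp: Let_def not_le)
  then have "?k \<in> S" "f n \<le> f ?k"
    using arg_max_on_if_finite[where f = f and S = S] assms(1) by auto
  then have "T \<le> f ?k \<or> (0 \<le> f ?k - f n \<and> f ?k - f n < \<epsilon> * T)"
    using n assms(2) by (intro large_or_near_tie) auto
  then show ?thesis
    using \<open>?k \<in> S\<close> n by (intro bexI[of _ ?k] bexI[of _ n]) auto
qed

lemma (in prob_space) prob_large_or_near_tie_le:
  fixes X :: "'i \<Rightarrow> 'a \<Rightarrow> real"
  assumes S: "finite S" and \<sigma>: "0 < \<sigma>" and "0 \<le> T" "0 \<le> \<eta>"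
    and X: "\<And>p. p \<in> S \<Longrightarrow> distributed M lborel (X p) (normal_density 0 \<sigma>)"
    and gap: "\<And>p q. p \<in> S \<Longrightarrow> q \<in> S \<Longrightarrow> p \<noteq> q \<Longrightarrow>
                distributed M lborel (\<lambda>x. X p x - X q x) (normal_density 0 (\<sigma> * sqrt 2))"
    and A: "A \<subseteq> {x \<in> space M. \<exists>p\<in>S. \<exists>q\<in>S. p \<noteq> q \<and>
                (T \<le> X p x \<or> (0 \<le> X p x - X q x \<and> X p x - X q x < \<eta>))}"
  shows "prob A \<le> real (card S * (card S - 1)) * (exp (- T / \<sigma>) + \<eta> / (2 * \<sigma>))"
proof -
  define pairs where "pairs = Sigma S (\<lambda>p. S - {p})"
  define large where "large p = {x \<in> space M. T \<le> X p x}" for p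
  define near where "near p q = {x \<in> space M. 0 \<le> X p x - X q x \<and> X p x - X q x < \<eta>}" for p q
  have [measurable]: "X p \<in> borel_measurable M" if "p \<in> S" for p
    using distributed_measurable[OF X[OF that]] by simp
  have events: "large p \<in> events" "near p q \<in> events" if "p \<in> S" "q \<in> S" for p q
    using that unfolding large_def near_def by measurable
  have pair_events: "(\<lambda>(p, q). large p \<union> near p q) ` pairs \<subseteq> events"
    using events by (auto simp: pairs_def)
  have pair_bound: "prob (large p \<union> near p q) \<le> exp (- T / \<sigma>) + \<eta> / (2 * \<sigma>)"
    if "p \<in> S" "q \<in> S" "p \<noteq> q" for p q
  proof -
    have "sqrt 4 \<le> sqrt (2 * (2 * pi))"
      using pi_gt3 by (subst real_sqrt_le_iff) simp
    then have "sqrt 4 \<le> sqrt 2 * sqrt (2 * pi)"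
      by (simp only: real_sqrt_mult)
    then have "2 \<le> sqrt 2 * sqrt (2 * pi)"
      by simp
    then have "\<eta> / (\<sigma> * sqrt 2 * sqrt (2 * pi)) \<le> \<eta> / (2 * \<sigma>)"
      using \<sigma> \<open>0 \<le> \<eta>\<close> by (intro divide_left_mono) (auto simp: mult_ac)
    moreover have "prob (near p q) \<le> \<eta> / (\<sigma> * sqrt 2 * sqrt (2 * pi))"
      using prob_normal_interval_le[OF gap[OF that], of 0 \<eta>] \<sigma> \<open>0 \<le> \<eta>\<close>
      by (simp add: near_def)
    moreover have "prob (large p) \<le> exp (- T / \<sigma>)"
      using prob_normal_tail_le[OF X[OF \<open>p \<in> S\<close>] \<sigma> \<open>0 \<le> T\<close>] by (simp add: large_def)
    moreover have "prob (large p \<union> near p q) \<le> prob (large p) + prob (near p q)"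
      using events that by (intro measure_Un_le) auto
    ultimately show ?thesis by linarith
  qed
  have "{x \<in> space M. \<exists>p\<in>S. \<exists>q\<in>S. p \<noteq> q \<and>
                (T \<le> X p x \<or> (0 \<le> X p x - X q x \<and> X p x - X q x < \<eta>))}
        \<subseteq> (\<Union>(p, q)\<in>pairs. large p \<union> near p q)"
    by (auto simp: pairs_def large_def near_def)
  with A have "prob A \<le> prob (\<Union>(p, q)\<in>pairs. large p \<union> near p q)"
    using S events by (intro finite_measure_mono) (auto simp: pairs_def)
  also have "\<dots> \<le> (\<Sum>(p, q)\<in>pairs. prob (large p \<union> near p q))"
    using finite_measure_subadditive_finite[OF _ pair_events] S
    by (simp add: pairs_def prod.case_distrib)
  also have "\<dots> \<le> (\<Sum>(p, q)\<in>pairs. exp (- T / \<sigma>) + \<eta> / (2 * \<sigma>))"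
    using pair_bound by (intro sum_mono) (auto simp: pairs_def)
  also have "\<dots> = real (card pairs) * (exp (- T / \<sigma>) + \<eta> / (2 * \<sigma>))"
    by simp
  also have "card pairs = card S * (card S - 1)"
    using S by (simp add: pairs_def card_Diff_singleton)
  finally show ?thesis .
qed

lemma ordered_pairs_exp_le:
  fixes N M :: nat and \<delta> :: real
  assumes N: "1 \<le> N" and \<delta>: "0 < \<delta>" "\<delta> < 1" and M: "real N * ln (real N / \<delta>) \<le> real M"
  shows "real (N * (N - 1)) * exp (- (3 * real M)) \<le> \<delta> / 2"
proof (cases "N = 1")
  case False
  then have "2 \<le> N" using N by simp
  have "1 < real N / \<delta>"
    using \<open>2 \<le> N\<close> \<delta> by (simp add: field_simps)
  then have "ln (real N / \<delta>) \<le> real N * ln (real N / \<delta>)"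
    using \<open>2 \<le> N\<close> by (intro mult_le_cancel_right1[THEN iffD2]) auto
  then have "exp (- (3 * real M)) \<le> exp (- (3 * ln (real N / \<delta>)))"
    using M by simp
  also have "\<dots> = (\<delta> / real N) ^ 3"
  proof -
    have "exp (3 * ln (real N / \<delta>)) = exp (ln (real N / \<delta>)) ^ 3"
      by (metis exp_of_nat_mult of_nat_numeral)
    then show ?thesis
      using \<open>1 < real N / \<delta>\<close> by (simp add: exp_minus power_divide)
  qed
  finally have "real (N * (N - 1)) * exp (- (3 * real M)) \<le> real N ^ 2 * (\<delta> / real N) ^ 3"
    by (intro mult_mono) (auto simp: power2_eq_square intro!: mult_left_mono)
  also have "\<dots> = \<delta> ^ 3 / real N"
    using \<open>2 \<le> N\<close> by (simp add: power_divide power2_eq_square power3_eq_cube)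
  also have "\<dots> \<le> \<delta> / 2"
  proof -
    have "\<delta> ^ 3 \<le> \<delta>"
      using \<delta> power_decreasing[of 1 3 \<delta>] by simp
    then show ?thesis
      using \<open>2 \<le> N\<close> \<delta> by (intro frac_le) auto
  qed
  finally show ?thesis .
qed (use \<delta> in simp)

lemma ordered_pairs_union_bound_le:
  fixes N M :: nat and \<delta> :: real
  assumes N: "1 \<le> N" and \<delta>: "0 < \<delta>" "\<delta> < 1" and M: "real N * ln (real N / \<delta>) \<le> real M"
  shows "real (N * (N - 1)) * (exp (- (3 * real M)) + \<delta> / (2 * real N ^ 2)) \<le> \<delta>"
proof -
  have "real (N * (N - 1)) \<le> real N ^ 2"
    by (auto simp: power2_eq_square intro!: mult_left_mono)
  then have "real (N * (N - 1)) * (\<delta> / (2 * real N ^ 2)) \<le> real N ^ 2 * (\<delta> / (2 * real N ^ 2))"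
    using \<delta> by (intro mult_right_mono) auto
  also have "\<dots> = \<delta> / 2"
    using N by simp
  finally show ?thesis
    using ordered_pairs_exp_le[OF N \<delta> M] unfolding distrib_left by linarith
qed

lemma prob_arg_max_ip_dominates_ge:
  fixes d N M :: nat and \<delta> \<sigma>0 :: real and v :: "nat \<Rightarrow> nat \<Rightarrow> real"
  assumes N: "1 \<le> N" and M: "1 \<le> M" and \<delta>: "0 < \<delta>" "\<delta> < 1" and s: "0 < \<sigma>0"
    and orth: "orthonormal_family d N v" and MN: "real N * ln (real N / \<delta>) \<le> real M"
  shows "1 - \<delta> \<le> measure (gauss_init d \<sigma>0)
          {W \<in> space (gauss_init d \<sigma>0).
             let nstar = arg_max_on (\<lambda>n. ip d W (v n)) {1..N} in
             \<forall>n\<in>{1..N}. n \<noteq> nstar \<longrightarrow>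
               ip d W (v n) \<le> (1 - \<delta> / (3 * real M * real N ^ 2)) * ip d W (v nstar)}"
    (is "_ \<le> measure ?P ?G")
proof -
  interpret prob_space ?P
    using s by (rule prob_space_gauss_init)
  have "0 < d"
    using orth N by (rule orthonormal_family_dim_pos)
  define X where "X n W = ip d W (v n)" for n W
  define \<epsilon> where "\<epsilon> = \<delta> / (3 * real M * real N ^ 2)"
  define \<sigma> where "\<sigma> = \<sigma>0 / sqrt d"
  define T where "T = 3 * real M * \<sigma>"
  have "0 < \<sigma>" "0 \<le> \<epsilon>" "0 \<le> T"
    using s \<delta> \<open>0 < d\<close> by (simp_all add: \<sigma>_def \<epsilon>_def T_def)
  have X_normal: "distributed ?P lborel (X p) (normal_density 0 \<sigma>)" if "p \<in> {1..N}" for p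
    using distributed_gauss_init_orthonormal[OF s orth that] by (simp add: X_def[abs_def] \<sigma>_def)
  have gap_normal: "distributed ?P lborel (\<lambda>W. X p W - X q W) (normal_density 0 (\<sigma> * sqrt 2))"
    if "p \<in> {1..N}" "q \<in> {1..N}" "p \<noteq> q" for p q
    using distributed_gauss_init_orthonormal_diff[OF s orth that] by (simp add: X_def \<sigma>_def)
  have "X n \<in> borel_measurable ?P" for n
  proof -
    have "X n = ip d (v n)"
      by (simp add: X_def fun_eq_iff ip_commute)
    then show ?thesis
      by simp
  qed
  then have "?G \<in> events"
    using sets_arg_max_on_dominates[where S = "{1..N}" and X = X and c = "1 - \<epsilon>", OF finite_atLeastAtMost]
    by (simp add: X_def \<epsilon>_def)
  have "space ?P - ?G \<subseteq> {W \<in> space ?P. \<exists>p\<in>{1..N}. \<exists>q\<in>{1..N}. p \<noteq> q \<and>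
          (T \<le> X p W \<or> (0 \<le> X p W - X q W \<and> X p W - X q W < \<epsilon> * T))}"
  proof
    fix W assume "W \<in> space ?P - ?G"
    then show "W \<in> {W \<in> space ?P. \<exists>p\<in>{1..N}. \<exists>q\<in>{1..N}. p \<noteq> q \<and>
          (T \<le> X p W \<or> (0 \<le> X p W - X q W \<and> X p W - X q W < \<epsilon> * T))}"
      using arg_max_on_large_or_near_tie[where S = "{1..N}" and f = "\<lambda>n. X n W" and \<epsilon> = \<epsilon> and T = T]
        \<open>0 \<le> \<epsilon>\<close> by (auto simp: X_def \<epsilon>_def)
  qed
  then have "prob (space ?P - ?G)
      \<le> real (card {1..N} * (card {1..N} - 1)) * (exp (- T / \<sigma>) + \<epsilon> * T / (2 * \<sigma>))"
    using \<open>0 < \<sigma>\<close> \<open>0 \<le> T\<close> \<open>0 \<le> \<epsilon>\<close> X_normal gap_normal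
    by (intro prob_large_or_near_tie_le) auto
  also have "\<dots> = real (N * (N - 1)) * (exp (- (3 * real M)) + \<delta> / (2 * real N ^ 2))"
    using \<open>0 < \<sigma>\<close> M by (simp add: T_def \<epsilon>_def field_simps)
  also have "\<dots> \<le> \<delta>"
    using N \<delta> MN by (rule ordered_pairs_union_bound_le)
  finally show ?thesis
    using prob_compl[OF \<open>?G \<in> events\<close>] by simp
qed

theorem lemma7:
  "\<exists>C>0. \<forall>(d::nat) (N::nat) (M::nat) (\<delta>::real) (\<sigma>0::real) (v :: nat \<Rightarrow> nat \<Rightarrow> real).
     N \<ge> 1 \<and> M \<ge> 1 \<and> 0 < \<delta> \<and> \<delta> < 1 \<and> \<sigma>0 > 0 \<and> orthonormal_family d N v \<and>
     real M \<ge> C * real N * ln (real N / \<delta>) \<longrightarrow>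
     (\<forall>i\<in>{1..M}.
        measure (gauss_init d \<sigma>0)
          {W \<in> space (gauss_init d \<sigma>0).
             let nstar = arg_max_on (\<lambda>n. ip d W (v n)) {1..N} in
             \<forall>n\<in>{1..N}. n \<noteq> nstar \<longrightarrow>
               ip d W (v n) \<le> (1 - \<delta> / (3 * real M * real N ^ 2)) * ip d W (v nstar)}
        \<ge> 1 - \<delta>)"
  by (intro exI[of _ "1 :: real"] conjI allI impI ballI prob_arg_max_ip_dominates_ge) auto

end
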